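(* Let $(X,\mathcal T,P,\leq,\{\sigma_x:x\in X\})$ be a typed topological space. For any $x\in X$ and $p\in P$: (1) the type-$p$-connected component $p\vdash C(x)$ is type-$p$-connected; (2) $p\vdash CL_1(p\vdash C(x))=p\vdash C(x)$; and (3) $p\vdash tr(p\vdash C(x))=p\vdash C(x)$.
   Context: A typed topological space $(X,\mathcal T,P,\leq,\{\sigma_x:x\in X\})$ consists of a topological space $(X,\mathcal T)$, a partially ordered set $(P,\leq)$ of types, and for each $x\in X$ a partial function $\sigma_x:\{O\in\mathcal T:x\in O\}\to P$ such that for all $U,V$ in its domain, $\sigma_x(U)\leq\sigma_x(V)$ iff $U\subseteq V$. $U$ is a type-$p$ neighborhood of $x$, written $p\vdash U(x)$, if $U$ is in the domain of $\sigma_x$ and $\sigma_x(U)=p$. $x$ is a $p$-accumulation point of $A$ if every type-$p$ neighborhood of $x$ meets $A$. $p\vdash CL_1(A)=A\cup\{p\text{-accumulation points of }A\}$, $p\vdash CL_n(A)=p\vdash CL_1(p\vdash CL_{n-1}(A))$, $p\vdash tr(A)=\bigcup_{n\ge1}p\vdash CL_n(A)$. A set $A\subseteq X$ is type-$p$-connected if there do not exist two families of type-$p$ neighborhoods $\{p\vdash U(x_i):i\in I\}$ and $\{p\vdash U(x_j):j\in J\}$ with $I\neq\emptyset$, $J\neq\emptyset$, $A=\{x_i:i\in I\}\cup\{x_j:j\in J\}$ and $\left(\bigcup_{i\in I}U(x_i)\right)\cap\left(\bigcup_{j\in J}U(x_j)\right)=\emptyset$. The type-$p$-connected component $p\vdash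 C(x)$ is the union of all type-$p$-connected subsets of $X$ containing $x$. *)

theory Defs
  imports "HOL-Analysis.Analysis"
begin

text \<open>A typed topological space: a topology T on X = topspace T, a partially ordered
  type 'p of types, and for every point x a partial function sg x from the open
  neighbourhoods of x to 'p (encoded via option), order-embedding w.r.t. inclusion.\<close>

definition typed_top_space :: "'a topology \<Rightarrow> ('a \<Rightarrow> 'a set \<Rightarrow> ('p::order) option) \<Rightarrow> bool" where
  "typed_top_space T sg \<longleftrightarrow>
     (\<forall>x U. sg x U \<noteq> None \<longrightarrow> x \<in> topspace T \<and> openin T U \<and> x \<in> U) \<and>
     (\<forall>x U V p q. sg x U = Some p \<longrightarrow> sg x V = Some q \<longrightarrow> (p \<le> q \<longleftrightarrow> U \<subseteq> V))"

definition typed_nbhd :: "('a \<Rightarrow> 'a set \<Rightarrow> 'p option) \<Rightarrow> 'p \<Rightarrow> 'a set \<Rightarrow> 'a \<Rightarrow> bool" where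
  "typed_nbhd sg p U x \<longleftrightarrow> sg x U = Some p"

definition p_acc_point :: "'a topology \<Rightarrow> ('a \<Rightarrow> 'a set \<Rightarrow> 'p option) \<Rightarrow> 'p \<Rightarrow> 'a set \<Rightarrow> 'a \<Rightarrow> bool" where
  "p_acc_point T sg p A x \<longleftrightarrow> x \<in> topspace T \<and>
     (\<forall>U. typed_nbhd sg p U x \<longrightarrow> U \<inter> A \<noteq> {})"

definition CL1 :: "'a topology \<Rightarrow> ('a \<Rightarrow> 'a set \<Rightarrow> 'p option) \<Rightarrow> 'p \<Rightarrow> 'a set \<Rightarrow> 'a set" where
  "CL1 T sg p A = A \<union> {x. p_acc_point T sg p A x}"

text \<open>CLn T sg p n A = p |- CL_n(A) (meaningful for n \<ge> 1; CLn ... 1 = CL1)\<close>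
definition CLn :: "'a topology \<Rightarrow> ('a \<Rightarrow> 'a set \<Rightarrow> 'p option) \<Rightarrow> 'p \<Rightarrow> nat \<Rightarrow> 'a set \<Rightarrow> 'a set" where
  "CLn T sg p n A = (CL1 T sg p ^^ n) A"

definition typed_tr :: "'a topology \<Rightarrow> ('a \<Rightarrow> 'a set \<Rightarrow> 'p option) \<Rightarrow> 'p \<Rightarrow> 'a set \<Rightarrow> 'a set" where
  "typed_tr T sg p A = (\<Union>n\<in>{1..}. CLn T sg p n A)"

text \<open>Families of type-p neighbourhoods are encoded as sets of pairs (point, neighbourhood);
  repetitions of indices are irrelevant for the definition.\<close>
definition p_connected :: "('a \<Rightarrow> 'a set \<Rightarrow> 'p option) \<Rightarrow> 'p \<Rightarrow> 'a set \<Rightarrow> bool" where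
  "p_connected sg p A \<longleftrightarrow>
     \<not> (\<exists>F G :: ('a \<times> 'a set) set.
          F \<noteq> {} \<and> G \<noteq> {} \<and>
          (\<forall>(y,U)\<in>F. typed_nbhd sg p U y) \<and>
          (\<forall>(y,U)\<in>G. typed_nbhd sg p U y) \<and>
          A = fst ` F \<union> fst ` G \<and>
          (\<Union>(snd ` F)) \<inter> (\<Union>(snd ` G)) = {})"

definition p_component :: "'a topology \<Rightarrow> ('a \<Rightarrow> 'a set \<Rightarrow> 'p option) \<Rightarrow> 'p \<Rightarrow> 'a \<Rightarrow> 'a set" where
  "p_component T sg p x = \<Union>{A. A \<subseteq> topspace T \<and> x \<in> A \<and> p_connected sg p A}"

end

theory Submission
  imports Defs
begin

text \<open>Since a point lies in each of its neighbourhoods, the two families of a separation have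
  disjoint sets of centres, and a type-p-connected set covered by the centres lies entirely
  on one side. Hence all connected sets through x lie on the side of x, so their union, the
  component, is connected. If A lies on one side, a centre z of the other side lying in CL1 A
  is not in A, so it is a p-accumulation point of A; hence its neighbourhood from the other side
  meets A, i.e. meets the neighbourhood of some point of A from the first side. So every B with A \<subseteq> B \<subseteq> CL1 A is
  connected; for the component this makes CL1 of it connected, hence contained in it.\<close>

definition p_separation ::
    "('a \<Rightarrow> 'a set \<Rightarrow> 'p option) \<Rightarrow> 'p \<Rightarrow> ('a \<times> 'a set) set \<Rightarrow> ('a \<times> 'a set) set \<Rightarrow> bool" where
  "p_separation sg p F G \<longleftrightarrow>
     F \<noteq> {} \<and> G \<noteq> {} \<and>
     (\<forall>(y,U)\<in>F. typed_nbhd sg p U y) \<and>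
     (\<forall>(y,U)\<in>G. typed_nbhd sg p U y) \<and>
     \<Union>(snd ` F) \<inter> \<Union>(snd ` G) = {}"

lemma p_separationD:
  assumes "p_separation sg p F G"
  shows "F \<noteq> {}" and "G \<noteq> {}"
    and "(y,U) \<in> F \<Longrightarrow> typed_nbhd sg p U y" and "(y,U) \<in> G \<Longrightarrow> typed_nbhd sg p U y"
    and "(y,U) \<in> F \<Longrightarrow> (z,V) \<in> G \<Longrightarrow> U \<inter> V = {}"
  using assms unfolding p_separation_def by fastforce+

lemma p_separation_commute: "p_separation sg p F G \<longleftrightarrow> p_separation sg p G F"
  unfolding p_separation_def by blast

lemma p_connected_iff_no_separation:
  "p_connected sg p A \<longleftrightarrow> \<not> (\<exists>F G. p_separation sg p F G \<and> A = fst ` F \<union> fst ` G)"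
  unfolding p_connected_def p_separation_def by blast

lemma not_p_connectedE:
  assumes "\<not> p_connected sg p A" and "x \<in> A"
  obtains F G where "p_separation sg p F G" "A = fst ` F \<union> fst ` G" "x \<in> fst ` F"
proof -
  obtain F G where sep: "p_separation sg p F G" and A: "A = fst ` F \<union> fst ` G"
    using assms(1) unfolding p_connected_iff_no_separation by blast
  show thesis
  proof (cases "x \<in> fst ` F")
    case True
    with sep A show thesis by (rule that)
  next
    case False
    with assms(2) A have "x \<in> fst ` G" by blast
    with sep A show thesis by (intro that[of G F]) (auto simp: p_separation_commute)
  qed
qed

lemma typed_nbhd_mem:
  assumes "typed_top_space T sg" and "typed_nbhd sg p U y"
  shows "y \<in> U"
  using assms unfolding typed_top_space_def typed_nbhd_def by fastforce

lemma p_separation_centres_disjoint: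
  assumes "typed_top_space T sg" and sep: "p_separation sg p F G"
  shows "fst ` F \<inter> fst ` G = {}"
proof (rule ccontr)
  assume "fst ` F \<inter> fst ` G \<noteq> {}"
  then obtain y U V where yU: "(y,U) \<in> F" and yV: "(y,V) \<in> G" by force
  have "y \<in> U" "y \<in> V"
    using assms(1) p_separationD(3)[OF sep yU] p_separationD(4)[OF sep yV] by (auto intro: typed_nbhd_mem)
  with p_separationD(5)[OF sep yU yV] show False by blast
qed

lemma p_connected_subset_centres:
  assumes "p_connected sg p A" and sep: "p_separation sg p F G"
    and cover: "A \<subseteq> fst ` F \<union> fst ` G"
  shows "A \<subseteq> fst ` F \<or> A \<subseteq> fst ` G"
proof (rule ccontr)
  assume sides: "\<not> (A \<subseteq> fst ` F \<or> A \<subseteq> fst ` G)"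
  define F' where "F' = {q\<in>F. fst q \<in> A}"
  define G' where "G' = {q\<in>G. fst q \<in> A}"
  have "F' \<noteq> {}" "G' \<noteq> {}"
    using sides cover unfolding F'_def G'_def by force+
  moreover have "F' \<subseteq> F" "G' \<subseteq> G"
    unfolding F'_def G'_def by auto
  ultimately have "p_separation sg p F' G'"
    using sep unfolding p_separation_def by blast
  moreover have "A = fst ` F' \<union> fst ` G'"
    using cover unfolding F'_def G'_def by force
  ultimately show False
    using assms(1) unfolding p_connected_iff_no_separation by blast
qed

lemma p_connected_empty: "p_connected sg p {}"
  unfolding p_connected_iff_no_separation by (auto dest: p_separationD(1))

lemma p_connected_singleton:
  assumes "typed_top_space T sg"
  shows "p_connected sg p {y}"
proof (rule ccontr)
  assume "\<not> p_connected sg p {y}"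
  then obtain F G where sep: "p_separation sg p F G" and eq: "{y} = fst ` F \<union> fst ` G"
    and yF: "y \<in> fst ` F"
    by (rule not_p_connectedE) simp
  have "fst ` G \<subseteq> {y}"
    unfolding eq by (rule Un_upper2)
  moreover have "fst ` G \<noteq> {}"
    using p_separationD(2)[OF sep] by simp
  ultimately have "y \<in> fst ` G" by (simp add: subset_singleton_iff)
  with yF p_separation_centres_disjoint[OF assms sep] show False by blast
qed

lemma p_connected_Union:
  assumes "typed_top_space T sg" and "\<And>A. A \<in> \<A> \<Longrightarrow> p_connected sg p A \<and> x \<in> A"
  shows "p_connected sg p (\<Union>\<A>)"
proof (rule ccontr)
  assume not_conn: "\<not> p_connected sg p (\<Union>\<A>)"
  then have "\<Union>\<A> \<noteq> {}" by (metis p_connected_empty)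
  with assms(2) have "x \<in> \<Union>\<A>" by blast
  with not_conn obtain F G where sep: "p_separation sg p F G"
    and eq: "\<Union>\<A> = fst ` F \<union> fst ` G" and x: "x \<in> fst ` F"
    by (rule not_p_connectedE)
  have disj: "fst ` F \<inter> fst ` G = {}"
    using assms(1) sep by (rule p_separation_centres_disjoint)
  have "A \<subseteq> fst ` F" if "A \<in> \<A>" for A
  proof -
    have "A \<subseteq> fst ` F \<or> A \<subseteq> fst ` G"
      using assms(2)[OF that] sep eq that by (intro p_connected_subset_centres) auto
    moreover have "x \<in> A" using assms(2)[OF that] ..
    ultimately show ?thesis using x disj by blast
  qed
  then have "\<Union>\<A> \<subseteq> fst ` F" by (rule Union_least)
  with eq have "fst ` G \<subseteq> fst ` F" by simp
  with disj have "G = {}" by blast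
  with p_separationD(2)[OF sep] show False ..
qed

lemma p_separation_centres_not_subset_CL1:
  assumes "typed_top_space T sg" and sep: "p_separation sg p F G" and "A \<subseteq> fst ` F"
  shows "\<not> fst ` G \<subseteq> CL1 T sg p A"
proof
  assume G_CL1: "fst ` G \<subseteq> CL1 T sg p A"
  from p_separationD(2)[OF sep] obtain z V where zV: "(z,V) \<in> G" by auto
  have "z \<notin> A"
    using zV assms(3) p_separation_centres_disjoint[OF assms(1) sep] by force
  with zV G_CL1 have "p_acc_point T sg p A z" unfolding CL1_def by force
  with p_separationD(4)[OF sep zV] obtain w where w: "w \<in> V" "w \<in> A"
    unfolding p_acc_point_def by blast
  with assms(3) obtain U where wU: "(w,U) \<in> F" by force
  have "w \<in> U"
    using assms(1) p_separationD(3)[OF sep wU] by (rule typed_nbhd_mem)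
  with w(1) p_separationD(5)[OF sep wU zV] show False by blast
qed

lemma p_connected_between_CL1:
  assumes "typed_top_space T sg" and "p_connected sg p A"
    and "A \<subseteq> B" and "B \<subseteq> CL1 T sg p A"
  shows "p_connected sg p B"
proof (rule ccontr)
  assume "\<not> p_connected sg p B"
  then obtain F G where sep: "p_separation sg p F G" and eq: "B = fst ` F \<union> fst ` G"
    unfolding p_connected_iff_no_separation by blast
  with assms(2,3) have "A \<subseteq> fst ` F \<or> A \<subseteq> fst ` G"
    by (intro p_connected_subset_centres) auto
  then show False
  proof
    assume "A \<subseteq> fst ` F"
    from p_separation_centres_not_subset_CL1[OF assms(1) sep this] assms(4) eq show False
      by blast
  next
    assume "A \<subseteq> fst ` G"
    from sep have "p_separation sg p G F" by (simp add: p_separation_commute)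
    from p_separation_centres_not_subset_CL1[OF assms(1) this \<open>A \<subseteq> fst ` G\<close>] assms(4) eq
    show False by blast
  qed
qed

lemma subset_CL1: "A \<subseteq> CL1 T sg p A"
  unfolding CL1_def by (rule Un_upper1)

lemma CL1_subset_topspace: "A \<subseteq> topspace T \<Longrightarrow> CL1 T sg p A \<subseteq> topspace T"
  unfolding CL1_def p_acc_point_def by blast

lemma CLn_fixpoint: "CL1 T sg p A = A \<Longrightarrow> CLn T sg p n A = A"
  unfolding CLn_def by (induction n) simp_all

lemma typed_tr_fixpoint: "CL1 T sg p A = A \<Longrightarrow> typed_tr T sg p A = A"
  unfolding typed_tr_def by (auto simp: CLn_fixpoint)

lemma p_component_subset_topspace: "p_component T sg p x \<subseteq> topspace T"
  unfolding p_component_def by blast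

lemma p_component_maximal:
  "A \<subseteq> topspace T \<Longrightarrow> x \<in> A \<Longrightarrow> p_connected sg p A \<Longrightarrow> A \<subseteq> p_component T sg p x"
  unfolding p_component_def by blast

lemma self_in_p_component:
  assumes "typed_top_space T sg" and "x \<in> topspace T"
  shows "x \<in> p_component T sg p x"
  using p_component_maximal[OF _ _ p_connected_singleton[OF assms(1)]] assms(2) by blast

lemma p_connected_p_component:
  assumes "typed_top_space T sg"
  shows "p_connected sg p (p_component T sg p x)"
  unfolding p_component_def using assms by (rule p_connected_Union) blast

lemma CL1_p_component:
  assumes "typed_top_space T sg" and "x \<in> topspace T"
  shows "CL1 T sg p (p_component T sg p x) = p_component T sg p x"
proof
  let ?C = "p_component T sg p x"
  have "p_connected sg p (CL1 T sg p ?C)"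
    using assms(1) p_connected_p_component[OF assms(1)] subset_CL1 order_refl
    by (rule p_connected_between_CL1)
  moreover have "x \<in> CL1 T sg p ?C"
    using self_in_p_component[OF assms] unfolding CL1_def by blast
  ultimately show "CL1 T sg p ?C \<subseteq> ?C"
    by (intro p_component_maximal CL1_subset_topspace p_component_subset_topspace)
qed (rule subset_CL1)

theorem theorem2p15:
  fixes T :: "'a topology" and sg :: "'a \<Rightarrow> 'a set \<Rightarrow> ('p::order) option"
    and x :: 'a and p :: 'p
  assumes "typed_top_space T sg" and "x \<in> topspace T"
  shows "p_connected sg p (p_component T sg p x) \<and>
         CL1 T sg p (p_component T sg p x) = p_component T sg p x \<and>
         typed_tr T sg p (p_component T sg p x) = p_component T sg p x"
  using p_connected_p_component[OF assms(1)] CL1_p_component[OF assms]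
    typed_tr_fixpoint[OF CL1_p_component[OF assms]] by blast

end
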